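(* Let $E^*=\{\alpha\in\mathbb{Z}[\gamma]:\alpha>0\}$. The sets $$E^{(+)}=\{m+n\gamma^{-1}:\ m,n\in\mathbb{Z},\ m,n\ge1\},\qquad E^{(i)}=\{m\gamma^{-i}+n\gamma^{-i-2}:\ m,n\in\mathbb{Z},\ m\ge1,\ n\ge0\}\quad(i\in\mathbb{N})$$ are pairwise disjoint and their union is $E^*$.
   Context: $\gamma=(1+\sqrt5)/2$ and $\mathbb{Z}[\gamma]=\mathbb{Z}\oplus\mathbb{Z}\gamma^{-1}\subset\mathbb{R}$. *)

theory Defs
  imports Complex_Main
begin

definition gamma :: real where
  "gamma = (1 + sqrt 5) / 2"

definition Zgamma :: "real set" where
  "Zgamma = {of_int m + of_int n * inverse gamma | m n :: int. True}"

definition Estar :: "real set" where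
  "Estar = {\<alpha> \<in> Zgamma. \<alpha> > 0}"

definition Eplus :: "real set" where
  "Eplus = {of_int m + of_int n * inverse gamma | m n :: int. m \<ge> 1 \<and> n \<ge> 1}"

definition Ei :: "nat \<Rightarrow> real set" where
  "Ei i = {of_int m * inverse gamma ^ i + of_int n * inverse gamma ^ (i + 2)
           | m n :: int. m \<ge> 1 \<and> n \<ge> 0}"

end

theory Submission
  imports Defs
begin

(*
  Write phi = 1/gamma, so that phi^2 = 1 - phi and 0 < phi < 1.  Since phi is
  irrational, the map  emb (a, b) = a + b * phi  is a bijection from the lattice
  Z x Z onto Z[gamma], and multiplication by phi becomes the linear map
  shift (a, b) = (b, a - b).  In these coordinates
    E(+) = emb (positive quadrant),
    E(i) = emb (shift^i (base cone)),   base cone = {(a, b). b <= 0, a + b >= 1},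
  so the theorem is a statement about lattice points, proved in three parts:
  (1) one application of shift moves the base cone into a "transit" cone which
      shift maps into itself and which meets neither the base cone nor the
      positive quadrant; with injectivity of shift this gives all disjointness;
  (2) every lattice point with positive image outside the positive quadrant is
      reached from the base cone: dividing by phi (inverting shift) keeps the
      value positive and decreases |a| + |b| until the base cone is hit.
*)

definition phi :: real where
  "phi = inverse gamma"

lemma phi_closed_form: "phi = (sqrt 5 - 1) / 2"
proof -
  have "(1 + sqrt 5) * (sqrt 5 - 1) = (4::real)"
    by (simp add: algebra_simps)
  moreover have "1 + sqrt 5 \<noteq> (0::real)"
    using real_sqrt_ge_zero[of 5] by linarith
  ultimately show ?thesis
    unfolding phi_def gamma_def by (simp add: field_simps)
qed

lemma phi_square: "phi * phi = 1 - phi"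
  unfolding phi_closed_form by (simp add: field_simps)

lemma phi_pos: "0 < phi" and phi_less_one: "phi < 1"
proof -
  have "1 < sqrt (5::real)" and "sqrt (5::real) < 3"
    by (simp, rule real_less_lsqrt) auto
  then show "0 < phi" "phi < 1"
    unfolding phi_closed_form by auto
qed

text \<open>The norm form of Z[gamma] has no nontrivial integer zero: a zero with
  b \<noteq> 0 forces a and b to be even, and halving both gives infinite descent.
  This is the irrationality of phi in integral form.\<close>
lemma golden_norm_zero: "(a::int)^2 - a * b - b^2 = 0 \<Longrightarrow> b = 0"
proof (induction "nat \<bar>b\<bar>" arbitrary: a b rule: less_induct)
  case less
  show ?case
  proof (rule ccontr)
    assume b_nonzero: "b \<noteq> 0"
    have "even b"
    proof (rule ccontr)
      assume "odd b"
      then have "even (a * (a - b))" by auto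
      moreover have "a^2 - a * b - b^2 = a * (a - b) - b^2"
        by (simp add: algebra_simps power2_eq_square)
      ultimately have "odd (a^2 - a * b - b^2)" using \<open>odd b\<close> by auto
      with less.prems show False by simp
    qed
    then obtain b' where b': "b = 2 * b'" by blast
    have "a^2 = b * (a + b)"
      using less.prems by (simp add: algebra_simps power2_eq_square)
    then have "even (a^2)" using b' by simp
    then have "even a" by simp
    then obtain a' where a': "a = 2 * a'" by blast
    have "4 * (a'^2 - a' * b' - b'^2) = 0"
      using less.prems a' b' by (simp add: algebra_simps power2_eq_square)
    then have "a'^2 - a' * b' - b'^2 = 0" by simp
    moreover have "nat \<bar>b'\<bar> < nat \<bar>b\<bar>" using b' b_nonzero by auto
    ultimately have "b' = 0" using less.hyps by blast
    with b' b_nonzero show False by simp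
  qed
qed

definition emb :: "int \<times> int \<Rightarrow> real" where
  "emb p = of_int (fst p) + of_int (snd p) * phi"

text \<open>Since phi is a root of x^2 + x - 1, a vanishing a + b phi with b \<noteq> 0
  would give a zero of the norm form.\<close>
lemma emb_eq_zero: "emb (x, y) = 0 \<Longrightarrow> x = 0 \<and> y = 0"
proof -
  assume zero: "emb (x, y) = 0"
  have "y = 0"
  proof (rule ccontr)
    assume y_nonzero: "y \<noteq> 0"
    have phi_ratio: "phi = - of_int x / of_int y"
      using zero y_nonzero by (simp add: emb_def field_simps)
    have "phi * phi + phi - 1 = 0"
      using phi_square by simp
    then have "(of_int x)^2 - of_int x * of_int y - (of_int y)^2 = (0::real)"
      using y_nonzero unfolding phi_ratio by (simp add: field_simps power2_eq_square)
    then have "x^2 - x * y - y^2 = 0"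
      by (metis of_int_eq_0_iff of_int_diff of_int_mult of_int_power)
    with y_nonzero show False using golden_norm_zero by blast
  qed
  with zero show ?thesis by (simp add: emb_def)
qed

lemma inj_emb: "inj emb"
proof (rule injI)
  fix p q assume "emb p = emb q"
  then have "emb (fst p - fst q, snd p - snd q) = 0"
    by (simp add: emb_def algebra_simps)
  then show "p = q" by (auto dest: emb_eq_zero simp: prod_eq_iff)
qed

fun shift :: "int \<times> int \<Rightarrow> int \<times> int" where
  "shift (a, b) = (b, a - b)"

lemma emb_shift: "emb (shift p) = phi * emb p"
proof (cases p)
  case (Pair a b)
  then have "phi * emb p = of_int a * phi + of_int b * (phi * phi)"
    by (simp add: emb_def algebra_simps)
  also have "\<dots> = emb (shift p)"
    using Pair by (simp add: phi_square emb_def algebra_simps)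
  finally show ?thesis by simp
qed

lemma emb_shift_iter: "emb ((shift ^^ i) p) = phi ^ i * emb p"
  by (induction i) (simp_all add: emb_shift)

text \<open>Shift is invertible (its inverse is (a, b) \<mapsto> (a + b, a)), so orbits
  of different points never merge.\<close>
lemma inj_shift: "inj shift"
  by (rule injI) (auto simp: prod_eq_iff elim: shift.elims)

text \<open>The coordinates of E(+) and of E(0) respectively.\<close>
definition pos_quadrant :: "(int \<times> int) set" where
  "pos_quadrant = {(a, b). a \<ge> 1 \<and> b \<ge> 1}"

definition base_cone :: "(int \<times> int) set" where
  "base_cone = {(a, b). b \<le> 0 \<and> a + b \<ge> 1}"

text \<open>The cone through which the orbits of base points travel; it is
  shift-invariant and disjoint from the other two regions.\<close>
definition transit_cone :: "(int \<times> int) set" where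
  "transit_cone = {(a, b). a \<le> 0 \<and> b \<ge> 1} \<union> {(a, b). a \<ge> 1 \<and> b \<le> 0 \<and> a + b \<le> 0}"

lemma shift_iter_base_cone:
  assumes "p \<in> base_cone" and "i \<ge> 1"
  shows "(shift ^^ i) p \<in> transit_cone"
  using assms(2)
proof (induction i rule: dec_induct)
  case base
  show ?case using assms(1) by (cases p) (auto simp: base_cone_def transit_cone_def)
next
  case (step i)
  then show ?case by (cases "(shift ^^ i) p") (auto simp: transit_cone_def)
qed

lemma base_orbit_avoids_quadrant: "pos_quadrant \<inter> (shift ^^ i) ` base_cone = {}"
proof (cases "i = 0")
  case True
  then show ?thesis by (auto simp: pos_quadrant_def base_cone_def)
next
  case False
  then have "(shift ^^ i) ` base_cone \<subseteq> transit_cone"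
    using shift_iter_base_cone by auto
  then show ?thesis by (auto simp: pos_quadrant_def transit_cone_def)
qed

lemma base_transit_disjoint: "base_cone \<inter> transit_cone = {}"
  by (auto simp: base_cone_def transit_cone_def)

text \<open>If shift^i p = shift^j q with i < j, cancelling shift^i gives
  p = shift^(j-i) q, a point of the base cone inside the transit cone.\<close>
lemma base_orbits_disjoint_lt:
  assumes "i < j"
  shows "(shift ^^ i) ` base_cone \<inter> (shift ^^ j) ` base_cone = {}"
proof (rule ccontr)
  assume "(shift ^^ i) ` base_cone \<inter> (shift ^^ j) ` base_cone \<noteq> {}"
  then obtain p q where p: "p \<in> base_cone" and q: "q \<in> base_cone"
    and meet: "(shift ^^ i) p = (shift ^^ j) q"
    by blast
  have "j = i + (j - i)" using assms by simp
  then have "(shift ^^ j) q = (shift ^^ i) ((shift ^^ (j - i)) q)"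
    by (metis funpow_add o_apply)
  with meet have "p = (shift ^^ (j - i)) q"
    using inj_fn[OF inj_shift, of i] by (simp add: inj_eq)
  moreover have "(shift ^^ (j - i)) q \<in> transit_cone"
    using shift_iter_base_cone[OF q] assms by simp
  ultimately show False
    using p base_transit_disjoint by blast
qed

lemma base_orbits_disjoint:
  "i \<noteq> j \<Longrightarrow> (shift ^^ i) ` base_cone \<inter> (shift ^^ j) ` base_cone = {}"
  using base_orbits_disjoint_lt[of i j] base_orbits_disjoint_lt[of j i]
  by (cases "i < j") auto

text \<open>One step of the descent: a positive point outside the quadrant and the
  base cone is phi times the positive point (a + b, a), which again lies outside
  the quadrant and is either in the base cone or strictly smaller.\<close>
lemma descent_step:
  assumes pos: "0 < emb (a, b)"
    and "(a, b) \<notin> pos_quadrant" and "(a, b) \<notin> base_cone"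
  shows "0 < emb (a + b, a)" and "(a + b, a) \<notin> pos_quadrant"
    and "\<bar>a + b\<bar> + \<bar>a\<bar> < \<bar>a\<bar> + \<bar>b\<bar> \<or> (a + b, a) \<in> base_cone"
proof -
  have "phi * emb (a + b, a) = emb (a, b)"
    using emb_shift[of "(a + b, a)"] by simp
  then show "0 < emb (a + b, a)"
    using pos phi_pos by (metis zero_less_mult_pos)
  have cases: "(b \<le> 0 \<and> a + b \<le> 0) \<or> (a \<le> 0 \<and> b \<ge> 1)"
    using assms(2,3) by (auto simp: pos_quadrant_def base_cone_def)
  have value_pos: "0 < of_int a + of_int b * phi"
    using pos by (simp add: emb_def)
  show "(a + b, a) \<notin> pos_quadrant"
    using cases by (auto simp: pos_quadrant_def)
  show "\<bar>a + b\<bar> + \<bar>a\<bar> < \<bar>a\<bar> + \<bar>b\<bar> \<or> (a + b, a) \<in> base_cone"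
    using cases
  proof
    assume neg: "b \<le> 0 \<and> a + b \<le> 0"
    then have "of_int b * phi \<le> 0"
      using phi_pos by (simp add: mult_nonpos_nonneg)
    then have "a \<ge> 1" using value_pos by linarith
    with neg show ?thesis by auto
  next
    assume upper: "a \<le> 0 \<and> b \<ge> 1"
    then have "of_int b * phi < of_int b"
      using phi_less_one by simp
    then have "a + b \<ge> 1" using value_pos by linarith
    with upper show ?thesis by (cases "a = 0") (auto simp: base_cone_def)
  qed
qed

lemma positive_point_in_orbit:
  "0 < emb p \<Longrightarrow> p \<notin> pos_quadrant \<Longrightarrow> \<exists>i. p \<in> (shift ^^ i) ` base_cone"
proof (induction "nat (\<bar>fst p\<bar> + \<bar>snd p\<bar>)" arbitrary: p rule: less_induct)
  case less
  obtain a b where p: "p = (a, b)" by force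
  show ?case
  proof (cases "p \<in> base_cone")
    case True
    then show ?thesis by (intro exI[of _ 0]) simp
  next
    case False
    note step = descent_step[of a b, folded p, OF less.prems False]
    have "\<exists>i. (a + b, a) \<in> (shift ^^ i) ` base_cone"
      using step(3)
    proof
      assume "\<bar>a + b\<bar> + \<bar>a\<bar> < \<bar>a\<bar> + \<bar>b\<bar>"
      then have "nat (\<bar>a + b\<bar> + \<bar>a\<bar>) < nat (\<bar>fst p\<bar> + \<bar>snd p\<bar>)"
        using p by (simp add: nat_less_eq_zless)
      then show ?thesis
        using less.hyps step(1,2) by simp
    next
      assume "(a + b, a) \<in> base_cone"
      then show ?thesis by (intro exI[of _ 0]) simp
    qed
    then obtain i q where q: "q \<in> base_cone" and "(shift ^^ i) q = (a + b, a)"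
      by (metis imageE)
    then have "p = (shift ^^ Suc i) q"
      using p by simp
    with q show ?thesis by blast
  qed
qed

lemma positive_points_decomposition:
  "{p. 0 < emb p} = pos_quadrant \<union> (\<Union>i. (shift ^^ i) ` base_cone)"
proof (intro equalityI subsetI)
  fix p assume "p \<in> {p. 0 < emb p}"
  then show "p \<in> pos_quadrant \<union> (\<Union>i. (shift ^^ i) ` base_cone)"
    using positive_point_in_orbit by blast
next
  have quadrant_pos: "0 < emb p" if "p \<in> pos_quadrant" for p
    using that phi_pos by (auto simp: pos_quadrant_def emb_def add_pos_pos)
  have base_pos: "0 < emb p" if "p \<in> base_cone" for p
  proof -
    obtain a b where p: "p = (a, b)" by force
    with that have "b \<le> 0" "a + b \<ge> 1" by (auto simp: base_cone_def)
    then have "of_int b * (1 - phi) \<le> 0"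
      using phi_less_one by (intro mult_nonpos_nonneg) auto
    with p \<open>a + b \<ge> 1\<close> show ?thesis by (simp add: emb_def algebra_simps)
  qed
  fix p assume "p \<in> pos_quadrant \<union> (\<Union>i. (shift ^^ i) ` base_cone)"
  then consider "p \<in> pos_quadrant" | i q where "q \<in> base_cone" "p = (shift ^^ i) q"
    by blast
  then show "p \<in> {p. 0 < emb p}"
  proof cases
    case 1
    then show ?thesis using quadrant_pos by simp
  next
    case 2
    then show ?thesis using base_pos phi_pos by (simp add: emb_shift_iter)
  qed
qed

lemma Eplus_emb: "Eplus = emb ` pos_quadrant"
  unfolding Eplus_def pos_quadrant_def emb_def phi_def by force

lemma Ei_emb: "Ei i = emb ` (shift ^^ i) ` base_cone"
proof -
  text \<open>m phi^i + n phi^(i+2) = phi^i (m + n - n phi), since phi^2 = 1 - phi.\<close>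
  have coordinates: "of_int m * inverse gamma ^ i + of_int n * inverse gamma ^ (i + 2)
             = emb ((shift ^^ i) (m + n, - n))" for m n :: int
  proof -
    have "phi ^ (i + 2) = phi ^ i * (1 - phi)"
      by (simp add: power_add power2_eq_square phi_square)
    then have "of_int m * inverse gamma ^ i + of_int n * inverse gamma ^ (i + 2)
             = of_int m * phi ^ i + of_int n * (phi ^ i * (1 - phi))"
      by (simp only: phi_def)
    also have "\<dots> = phi ^ i * emb (m + n, - n)"
      by (simp add: emb_def algebra_simps)
    finally show ?thesis by (simp add: emb_shift_iter)
  qed
  show ?thesis
  proof (intro equalityI subsetI)
    fix x assume "x \<in> Ei i"
    then obtain m n :: int where "m \<ge> 1" "n \<ge> 0"
      and x: "x = emb ((shift ^^ i) (m + n, - n))"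
      unfolding Ei_def coordinates by blast
    then have "(m + n, - n) \<in> base_cone" by (simp add: base_cone_def)
    with x show "x \<in> emb ` (shift ^^ i) ` base_cone" by blast
  next
    fix x assume "x \<in> emb ` (shift ^^ i) ` base_cone"
    then obtain a b where "b \<le> 0" "a + b \<ge> 1" and x: "x = emb ((shift ^^ i) (a, b))"
      by (auto simp: base_cone_def)
    then have "x = emb ((shift ^^ i) ((a + b) + - b, - (- b)))" by simp
    with \<open>b \<le> 0\<close> \<open>a + b \<ge> 1\<close> show "x \<in> Ei i"
      unfolding Ei_def coordinates by (intro CollectI exI[of _ "a + b"] exI[of _ "- b"]) simp
  qed
qed

lemma Estar_emb: "Estar = emb ` {p. 0 < emb p}"
proof -
  have "Zgamma = range emb"
  proof (intro equalityI subsetI)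
    fix x assume "x \<in> Zgamma"
    then obtain m n :: int where "x = of_int m + of_int n * inverse gamma"
      unfolding Zgamma_def by blast
    then have "x = emb (m, n)" by (simp add: emb_def phi_def)
    then show "x \<in> range emb" by blast
  next
    fix x assume "x \<in> range emb"
    then show "x \<in> Zgamma" unfolding Zgamma_def emb_def phi_def by auto
  qed
  then show ?thesis
    unfolding Estar_def by auto
qed

theorem mainTheorem12:
  shows "(\<forall>i. Eplus \<inter> Ei i = {})
       \<and> (\<forall>i j. i \<noteq> j \<longrightarrow> Ei i \<inter> Ei j = {})
       \<and> Eplus \<union> (\<Union>i. Ei i) = Estar"
proof (intro conjI allI impI)
  fix i
  show "Eplus \<inter> Ei i = {}"
    unfolding Eplus_emb Ei_emb image_Int[OF inj_emb, symmetric]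
    using base_orbit_avoids_quadrant by simp
next
  fix i j :: nat assume "i \<noteq> j"
  then show "Ei i \<inter> Ei j = {}"
    unfolding Ei_emb image_Int[OF inj_emb, symmetric]
    using base_orbits_disjoint by simp
next
  show "Eplus \<union> (\<Union>i. Ei i) = Estar"
    unfolding Eplus_emb Ei_emb Estar_emb positive_points_decomposition
    by (simp add: image_Un image_UN)
qed

end
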